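(* For every $\lambda\in\mathbb{R}$, the operator $X:\mathcal{F}_\lambda(\mathbb{R}^{2n+1})\to\mathcal{S}^1_{\lambda+\frac{1}{n+1}}(\mathbb{R}^{2n+1})$ defined by \[X(f)(x,\xi)=\sum_{k=1}^n\big(\xi_{q^k}\partial_{p^k}f-\xi_{p^k}\partial_{q^k}f\big)-\partial_tf\,\langle E_s,\xi\rangle+\xi_t\big(E_s f+2(n+1)\lambda f\big)\] commutes with the action of every contact vector field: $X\circ L_Z=L_Z\circ X$ for all $Z\in\mathcal{C}(\mathbb{R}^{2n+1})$.
   Context: Let $n\ge1$, $M=\mathbb{R}^{2n+1}$ with coordinates $x=(q^1,\dots,q^n,p^1,\dots,p^n,t)$ and contact form $\alpha=\frac12\big(\sum_{i=1}^n(p^idq^i-q^idp^i)-dt\big)$. The contact algebra is $\mathcal{C}(M)=\{Z\in\mathrm{Vect}(M):L_Z\alpha=f_Z\alpha\text{ for some smooth function }f_Z\}$. $\mathcal{F}_\lambda(M)$ is the space of $\lambda$-densities $f|dx^1\wedge\cdots\wedge dx^{2n+1}|^\lambda$, identified with smooth functions $f$, on which a vector field $Y=\sum_jY^j\partial_{x^j}$ acts by $L_Yf=\sum_jY^j\partial_{x^j}f+\lambda(\sum_j\partial_{x^j}Y^j)f$. For $\delta\in\mathbb{R}$, $\mathcal{S}^k_\delta(M)$ is the space of smooth symmetric contravariant $k$-tensor fields with coefficients in $\delta$-densities, identified with smooth functions $S(x,\xi)$ on $M\times\mathbb{R}^{2n+1}$ that are homogeneous polynomials of degree $k$ in $\xi=(\xi_{q^1},\dots,\xi_{q^n},\xi_{p^1},\dots,\xi_{p^n},\xi_t)$;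 a vector field $Y$ acts by $L_YS=\sum_jY^j\partial_{x^j}S+\delta(\sum_j\partial_{x^j}Y^j)S-\sum_{j,l}(\partial_{x^l}Y^j)\xi_j\partial_{\xi_l}S$. Notation: $E_s=\sum_i(p^i\partial_{p^i}+q^i\partial_{q^i})$ and $\langle E_s,\xi\rangle=\sum_i(p^i\xi_{p^i}+q^i\xi_{q^i})$. *)

theory Defs
  imports "HOL-Analysis.Analysis"
begin

text \<open>Points of M = R^(2n+1) are triples (q, p, t) with q, p in real^'n, t real;
  n = CARD('n). Coordinates q^i = fst x $ i, p^i = fst (snd x) $ i, t = snd (snd x).\<close>

type_synonym 'n pt = "(real^'n) \<times> (real^'n) \<times> real"

definition pd :: "('a::euclidean_space \<Rightarrow> real) \<Rightarrow> 'a \<Rightarrow> 'a \<Rightarrow> real" where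
  "pd f v x = frechet_derivative f (at x) v"

fun Ck :: "nat \<Rightarrow> ('a::euclidean_space \<Rightarrow> real) \<Rightarrow> bool" where
  "Ck 0 f = continuous_on UNIV f"
| "Ck (Suc k) f = ((\<forall>x. f differentiable (at x)) \<and> (\<forall>b\<in>Basis. Ck k (\<lambda>x. pd f b x)))"

definition smooth :: "('a::euclidean_space \<Rightarrow> real) \<Rightarrow> bool" where
  "smooth f = (\<forall>k. Ck k f)"

definition smooth_vf :: "('a::euclidean_space \<Rightarrow> 'a) \<Rightarrow> bool" where
  "smooth_vf Y = (\<forall>b\<in>Basis. smooth (\<lambda>x. Y x \<bullet> b))"

definition divg :: "('a::euclidean_space \<Rightarrow> 'a) \<Rightarrow> 'a \<Rightarrow> real" where
  "divg Y x = (\<Sum>b\<in>Basis. pd (\<lambda>y. Y y \<bullet> b) b x)"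

text \<open>Lie derivative of a 1-form a (component a_b = a x \<bullet> b) along Y:
  (L_Y a)_b = Y(a_b) + sum_c a_c * d_b Y^c.\<close>
definition lie_form :: "('a::euclidean_space \<Rightarrow> 'a) \<Rightarrow> ('a \<Rightarrow> 'a) \<Rightarrow> 'a \<Rightarrow> 'a" where
  "lie_form Y a x = (\<Sum>b\<in>Basis.
      (pd (\<lambda>y. a y \<bullet> b) (Y x) x + (\<Sum>c\<in>Basis. (a x \<bullet> c) * pd (\<lambda>y. Y y \<bullet> c) b x)) *\<^sub>R b)"

text \<open>The contact form alpha = 1/2 (sum (p^i dq^i - q^i dp^i) - dt).\<close>
definition alpha :: "'n::finite pt \<Rightarrow> 'n pt" where
  "alpha x = ((1/2) *\<^sub>R fst (snd x), (- 1/2) *\<^sub>R fst x, - 1/2)"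

definition contact_vf :: "('n::finite pt \<Rightarrow> 'n pt) \<Rightarrow> bool" where
  "contact_vf Z = (smooth_vf Z \<and> (\<exists>g. smooth g \<and> (\<forall>x. lie_form Z alpha x = g x *\<^sub>R alpha x)))"

definition lie_dens :: "real \<Rightarrow> ('a::euclidean_space \<Rightarrow> 'a) \<Rightarrow> ('a \<Rightarrow> real) \<Rightarrow> 'a \<Rightarrow> real" where
  "lie_dens lam Y f x = pd f (Y x) x + lam * divg Y x * f x"

text \<open>Action on symbols S(x, xi) with coefficients in delta-densities
  (xi_j = xi \<bullet> j for j in Basis).\<close>
definition lie_symb :: "real \<Rightarrow> ('a::euclidean_space \<Rightarrow> 'a) \<Rightarrow> ('a \<Rightarrow> 'a \<Rightarrow> real) \<Rightarrow> 'a \<Rightarrow> 'a \<Rightarrow> real" where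
  "lie_symb del Y S x xi = pd (\<lambda>y. S y xi) (Y x) x + del * divg Y x * S x xi
     - (\<Sum>j\<in>Basis. \<Sum>l\<in>Basis. pd (\<lambda>y. Y y \<bullet> j) l x * (xi \<bullet> j) * pd (\<lambda>eta. S x eta) l xi)"

definition dq :: "'n::finite \<Rightarrow> ('n pt \<Rightarrow> real) \<Rightarrow> 'n pt \<Rightarrow> real" where
  "dq k f x = pd f (axis k 1, 0, 0) x"
definition dp :: "'n::finite \<Rightarrow> ('n pt \<Rightarrow> real) \<Rightarrow> 'n pt \<Rightarrow> real" where
  "dp k f x = pd f (0, axis k 1, 0) x"
definition dt :: "('n::finite pt \<Rightarrow> real) \<Rightarrow> 'n pt \<Rightarrow> real" where
  "dt f x = pd f (0, 0, 1) x"

definition Es :: "('n::finite pt \<Rightarrow> real) \<Rightarrow> 'n pt \<Rightarrow> real" where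
  "Es f x = (\<Sum>i\<in>UNIV. fst (snd x) $ i * dp i f x + fst x $ i * dq i f x)"
definition Es_xi :: "'n::finite pt \<Rightarrow> 'n pt \<Rightarrow> real" where
  "Es_xi x xi = (\<Sum>i\<in>UNIV. fst (snd x) $ i * fst (snd xi) $ i + fst x $ i * fst xi $ i)"

definition Xop :: "real \<Rightarrow> ('n::finite pt \<Rightarrow> real) \<Rightarrow> 'n pt \<Rightarrow> 'n pt \<Rightarrow> real" where
  "Xop lam f x xi =
     (\<Sum>k\<in>UNIV. fst xi $ k * dp k f x - fst (snd xi) $ k * dq k f x)
     - dt f x * Es_xi x xi
     + snd (snd xi) * (Es f x + 2 * (real CARD('n) + 1) * lam * f x)"

end

theory Submission
  imports Defs
begin

text \<open>Put \<open>c = 2(n+1)\<lambda>\<close>. The symbol \<open>X(u)(x,\<xi>)\<close> is linear in \<open>\<xi>\<close>: it is \<open>V\<^sub>c(u)(x) \<bullet> \<xi>\<close>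
  for a vector \<open>V\<^sub>c(u)(x)\<close> built from \<open>\<nabla>u(x)\<close>, \<open>u(x)\<close> and \<open>x\<close> only. A contact vector field is
  recovered from its Hamiltonian \<open>H = \<alpha>(Z)\<close> as \<open>Z = V\<^sub>-\<^sub>2(H)\<close>, i.e. as the vector of \<open>X(H)\<close> at the
  weight \<open>\<lambda> = -1/(n+1)\<close>, and then \<open>div Z = -2(n+1) \<partial>\<^sub>tH\<close>. Consequently both sides of
  \<open>X(L\<^sub>Z f) = L\<^sub>Z(X f)\<close> at a point \<open>x\<close> are explicit expressions in the values, gradients and Hessians
  of \<open>f\<close> and \<open>H\<close> at \<open>x\<close>, and their equality is a polynomial identity which only uses that both
  Hessians are bilinear and symmetric (Schwarz's theorem).\<close>

section \<open>Directional derivatives and symmetry of second derivatives\<close>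

lemma has_derivative_pd: "u differentiable (at x) \<Longrightarrow> (u has_derivative (\<lambda>w. pd u w x)) (at x)"
  unfolding pd_def using frechet_derivative_works by metis

lemma pd_eqI: "(u has_derivative u') (at x) \<Longrightarrow> pd u w x = u' w"
  unfolding pd_def using frechet_derivative_at by metis

lemma linear_pd: "u differentiable (at x) \<Longrightarrow> linear (\<lambda>w. pd u w x)"
  unfolding pd_def using linear_frechet_derivative by metis

lemma pd_scaleR: "u differentiable (at x) \<Longrightarrow> pd u (r *\<^sub>R a) x = r * pd u a x"
  using linear_scale[OF linear_pd] by fastforce

lemma pd_eq_sum_Basis:
  fixes u :: "'a::euclidean_space \<Rightarrow> real"
  assumes "u differentiable (at x)"
  shows "pd u w x = (\<Sum>b\<in>Basis. (w \<bullet> b) * pd u b x)"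
proof -
  have "pd u w x = pd u (\<Sum>b\<in>Basis. (w \<bullet> b) *\<^sub>R b) x"
    by (simp add: euclidean_representation)
  also have "\<dots> = (\<Sum>b\<in>Basis. (w \<bullet> b) * pd u b x)"
    using linear_sum[OF linear_pd[OF assms], of "\<lambda>b. (w \<bullet> b) *\<^sub>R b" Basis]
      linear_scale[OF linear_pd[OF assms]]
    by simp
  finally show ?thesis .
qed

lemma pd_const: "pd (\<lambda>y. c) w x = 0"
  by (rule pd_eqI[OF has_derivative_const])

lemma pd_inner_left: "pd (\<lambda>y. y \<bullet> v) w x = w \<bullet> v"
  by (rule pd_eqI[OF has_derivative_inner_left[OF has_derivative_ident]])

lemma pd_add:
  "u differentiable (at x) \<Longrightarrow> v differentiable (at x) \<Longrightarrow>
   pd (\<lambda>y. u y + v y) w x = pd u w x + pd v w x"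
  by (rule pd_eqI[OF has_derivative_add[OF has_derivative_pd has_derivative_pd]])

lemma pd_diff:
  "u differentiable (at x) \<Longrightarrow> v differentiable (at x) \<Longrightarrow>
   pd (\<lambda>y. u y - v y) w x = pd u w x - pd v w x"
  by (rule pd_eqI[OF has_derivative_diff[OF has_derivative_pd has_derivative_pd]])

lemma pd_mult:
  fixes u v :: "'a::euclidean_space \<Rightarrow> real"
  shows "u differentiable (at x) \<Longrightarrow> v differentiable (at x) \<Longrightarrow>
   pd (\<lambda>y. u y * v y) w x = u x * pd v w x + pd u w x * v x"
  by (rule pd_eqI[OF has_derivative_mult[OF has_derivative_pd has_derivative_pd]])

lemma pd_sum_const_mult:
  fixes u :: "'i \<Rightarrow> 'a::euclidean_space \<Rightarrow> real"
  assumes "finite I" "\<And>i. i \<in> I \<Longrightarrow> u i differentiable (at x)"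
  shows "pd (\<lambda>y. \<Sum>i\<in>I. k i * u i y) w x = (\<Sum>i\<in>I. k i * pd (u i) w x)"
  using assms
  by (intro pd_eqI has_derivative_sum has_derivative_mult_right has_derivative_pd) auto

definition grad :: "('a::euclidean_space \<Rightarrow> real) \<Rightarrow> 'a \<Rightarrow> 'a" where
  "grad u y = (\<Sum>b\<in>Basis. pd u b y *\<^sub>R b)"

lemma pd_eq_inner_grad: "u differentiable (at y) \<Longrightarrow> pd u w y = grad u y \<bullet> w"
  unfolding grad_def inner_sum_left
  by (subst pd_eq_sum_Basis) (auto simp: mult.commute inner_commute)

lemma pd_inner_eq_sum_Basis:
  fixes Y :: "'a::euclidean_space \<Rightarrow> 'b::euclidean_space"
  assumes "\<And>j. j \<in> Basis \<Longrightarrow> (\<lambda>y. Y y \<bullet> j) differentiable (at x)"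
  shows "pd (\<lambda>y. Y y \<bullet> v) w x = (\<Sum>j\<in>Basis. (v \<bullet> j) * pd (\<lambda>y. Y y \<bullet> j) w x)"
proof -
  have "pd (\<lambda>y. Y y \<bullet> v) w x = pd (\<lambda>y. \<Sum>j\<in>Basis. (v \<bullet> j) * (Y y \<bullet> j)) w x"
    by (simp add: euclidean_inner[of _ v] mult.commute)
  also have "\<dots> = (\<Sum>j\<in>Basis. (v \<bullet> j) * pd (\<lambda>y. Y y \<bullet> j) w x)"
    by (rule pd_sum_const_mult) (auto intro: assms)
  finally show ?thesis .
qed

lemma has_real_derivative_pd_line:
  fixes u :: "'a::euclidean_space \<Rightarrow> real"
  assumes du: "\<And>y. u differentiable (at y)"
  shows "((\<lambda>s. u (p + s *\<^sub>R a)) has_real_derivative pd u a (p + s *\<^sub>R a)) (at s)"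
proof -
  have "((\<lambda>s. p + s *\<^sub>R a) has_derivative (\<lambda>s. s *\<^sub>R a)) (at s)"
    by (auto intro!: derivative_eq_intros)
  from has_derivative_compose[OF this has_derivative_pd[OF du]]
  have "((\<lambda>s. u (p + s *\<^sub>R a)) has_derivative (\<lambda>t. pd u (t *\<^sub>R a) (p + s *\<^sub>R a))) (at s)" .
  then show ?thesis
    by (rule has_derivative_imp_has_field_derivative) (simp add: pd_scaleR[OF du] mult.commute)
qed

lemma second_difference_mvt:
  fixes u :: "'a::euclidean_space \<Rightarrow> real"
  assumes du: "\<And>y. u differentiable (at y)" and da: "\<And>y. pd u a differentiable (at y)"
    and h: "0 < h"
  shows "\<exists>s r. 0 < s \<and> s < h \<and> 0 < r \<and> r < h \<and>
     u (x + h *\<^sub>R a + h *\<^sub>R b) - u (x + h *\<^sub>R a) - u (x + h *\<^sub>R b) + u x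
       = h\<^sup>2 * pd (pd u a) b (x + s *\<^sub>R a + r *\<^sub>R b)"
proof -
  define \<phi> where "\<phi> s = u ((x + h *\<^sub>R b) + s *\<^sub>R a) - u (x + s *\<^sub>R a)" for s
  have "DERIV \<phi> s :> pd u a ((x + h *\<^sub>R b) + s *\<^sub>R a) - pd u a (x + s *\<^sub>R a)" for s
    unfolding \<phi>_def by (intro DERIV_diff has_real_derivative_pd_line du)
  from MVT2[OF h this] obtain s where s: "0 < s" "s < h"
    and \<phi>_mvt: "\<phi> h - \<phi> 0 = (h - 0) * (pd u a ((x + h *\<^sub>R b) + s *\<^sub>R a) - pd u a (x + s *\<^sub>R a))"
    by blast
  define \<psi> where "\<psi> r = pd u a ((x + s *\<^sub>R a) + r *\<^sub>R b)" for r
  have "DERIV \<psi> r :> pd (pd u a) b ((x + s *\<^sub>R a) + r *\<^sub>R b)" for r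
    unfolding \<psi>_def by (intro has_real_derivative_pd_line da)
  from MVT2[OF h this] obtain r where r: "0 < r" "r < h"
    and \<psi>_mvt: "\<psi> h - \<psi> 0 = (h - 0) * pd (pd u a) b ((x + s *\<^sub>R a) + r *\<^sub>R b)"
    by blast
  have "\<psi> h - \<psi> 0 = pd u a ((x + h *\<^sub>R b) + s *\<^sub>R a) - pd u a (x + s *\<^sub>R a)"
    unfolding \<psi>_def by (simp add: algebra_simps)
  with \<phi>_mvt \<psi>_mvt have "\<phi> h - \<phi> 0 = h\<^sup>2 * pd (pd u a) b (x + s *\<^sub>R a + r *\<^sub>R b)"
    by (simp add: power2_eq_square)
  moreover have "\<phi> h - \<phi> 0 = u (x + h *\<^sub>R a + h *\<^sub>R b) - u (x + h *\<^sub>R a) - u (x + h *\<^sub>R b) + u x"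
    unfolding \<phi>_def by (simp add: algebra_simps)
  ultimately show ?thesis using s r by metis
qed

lemma pd_pd_commute:
  fixes u :: "'a::euclidean_space \<Rightarrow> real"
  assumes du: "\<And>y. u differentiable (at y)"
    and da: "\<And>y. pd u a differentiable (at y)" and db: "\<And>y. pd u b differentiable (at y)"
    and ca: "isCont (pd (pd u a) b) x" and cb: "isCont (pd (pd u b) a) x"
  shows "pd (pd u a) b x = pd (pd u b) a x"
proof (rule ccontr)
  define A where "A = pd (pd u a) b"
  define B where "B = pd (pd u b) a"
  assume "pd (pd u a) b x \<noteq> pd (pd u b) a x"
  then have e: "\<bar>A x - B x\<bar> / 2 > 0" by (simp add: A_def B_def)
  obtain d1 where d1: "d1 > 0" "\<And>y. dist y x < d1 \<Longrightarrow> dist (A y) (A x) < \<bar>A x - B x\<bar> / 2"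
    using ca e unfolding A_def continuous_at_eps_delta by blast
  obtain d2 where d2: "d2 > 0" "\<And>y. dist y x < d2 \<Longrightarrow> dist (B y) (B x) < \<bar>A x - B x\<bar> / 2"
    using cb e unfolding B_def continuous_at_eps_delta by blast
  define h where "h = min d1 d2 / (2 * (norm a + norm b + 1))"
  have pos: "0 < 2 * (norm a + norm b + 1)" by (smt (verit) norm_ge_zero)
  have h: "h > 0" unfolding h_def using d1 d2 pos by (intro divide_pos_pos) auto
  have close: "dist (x + s *\<^sub>R v + r *\<^sub>R w) x < min d1 d2"
    if "0 < s" "s < h" "0 < r" "r < h" "norm v + norm w = norm a + norm b" for s r v w
  proof -
    have "dist (x + s *\<^sub>R v + r *\<^sub>R w) x \<le> s * norm v + r * norm w"
      using norm_triangle_ineq[of "s *\<^sub>R v" "r *\<^sub>R w"] that by (simp add: dist_norm)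
    also have "\<dots> \<le> h * norm v + h * norm w"
      using that by (intro add_mono mult_right_mono) auto
    also have "\<dots> = h * (norm a + norm b)"
      using that by (simp add: distrib_left[symmetric])
    also have "\<dots> < h * (2 * (norm a + norm b + 1))"
      using h pos by (intro mult_strict_left_mono) (smt (verit) norm_ge_zero)+
    also have "\<dots> = min d1 d2" using pos unfolding h_def by simp
    finally show ?thesis .
  qed
  obtain s r where sr: "0 < s" "s < h" "0 < r" "r < h"
    and A_mvt: "u (x + h *\<^sub>R a + h *\<^sub>R b) - u (x + h *\<^sub>R a) - u (x + h *\<^sub>R b) + u x
       = h\<^sup>2 * A (x + s *\<^sub>R a + r *\<^sub>R b)"
    using second_difference_mvt[OF du da h, of x b] unfolding A_def by blast
  obtain s' r' where sr': "0 < s'" "s' < h" "0 < r'" "r' < h"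
    and B_mvt: "u (x + h *\<^sub>R b + h *\<^sub>R a) - u (x + h *\<^sub>R b) - u (x + h *\<^sub>R a) + u x
       = h\<^sup>2 * B (x + s' *\<^sub>R b + r' *\<^sub>R a)"
    using second_difference_mvt[OF du db h, of x a] unfolding B_def by blast
  have "h\<^sup>2 * A (x + s *\<^sub>R a + r *\<^sub>R b) = h\<^sup>2 * B (x + s' *\<^sub>R b + r' *\<^sub>R a)"
    using A_mvt B_mvt by (simp add: algebra_simps)
  with h have AB: "A (x + s *\<^sub>R a + r *\<^sub>R b) = B (x + s' *\<^sub>R b + r' *\<^sub>R a)" by simp
  have "dist (A (x + s *\<^sub>R a + r *\<^sub>R b)) (A x) < \<bar>A x - B x\<bar> / 2"
    using d1 close[OF sr] by simp
  moreover have "dist (B (x + s' *\<^sub>R b + r' *\<^sub>R a)) (B x) < \<bar>A x - B x\<bar> / 2"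
    using d2 close[OF sr', of b a] by (simp add: add.commute)
  moreover have "\<not> (dist y (A x) < \<bar>A x - B x\<bar> / 2 \<and> dist y (B x) < \<bar>A x - B x\<bar> / 2)" for y
    unfolding dist_real_def by (auto simp: abs_if)
  ultimately show False using AB by metis
qed

definition C1 :: "('a::euclidean_space \<Rightarrow> real) \<Rightarrow> bool" where
  "C1 u \<longleftrightarrow> (\<forall>y. u differentiable (at y)) \<and> (\<forall>c\<in>Basis. continuous_on UNIV (pd u c))"

definition C2 :: "('a::euclidean_space \<Rightarrow> real) \<Rightarrow> bool" where
  "C2 u \<longleftrightarrow> C1 u \<and> (\<forall>c\<in>Basis. C1 (pd u c))"

lemma C1I:
  "(\<And>y. u differentiable (at y)) \<Longrightarrow> (\<And>c. c \<in> Basis \<Longrightarrow> continuous_on UNIV (pd u c)) \<Longrightarrow> C1 u"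
  by (simp add: C1_def)

lemma C1_imp_differentiable: "C1 u \<Longrightarrow> u differentiable (at y)"
  by (simp add: C1_def)

lemma C1_imp_continuous_on: "C1 u \<Longrightarrow> continuous_on UNIV u"
  unfolding C1_def
  by (meson continuous_on_eq_continuous_within differentiable_imp_continuous_within)

lemma C1_pd_eq_sum_Basis: "C1 u \<Longrightarrow> pd u a = (\<lambda>y. \<Sum>b\<in>Basis. (a \<bullet> b) * pd u b y)"
  by (rule ext, rule pd_eq_sum_Basis) (simp add: C1_def)

lemma C1_continuous_on_pd: "C1 u \<Longrightarrow> continuous_on UNIV (pd u a)"
  by (subst C1_pd_eq_sum_Basis) (auto simp: C1_def intro!: continuous_on_sum continuous_on_mult)

lemma C1_const: "C1 (\<lambda>y. k)"
  by (rule C1I) (auto simp: pd_const)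

lemma C1_inner_left: "C1 (\<lambda>y. y \<bullet> v)"
  by (rule C1I) (simp_all add: pd_inner_left[abs_def])

lemma C1_add:
  assumes u: "C1 u" and v: "C1 v"
  shows "C1 (\<lambda>y. u y + v y)"
proof (rule C1I)
  show "(\<lambda>y. u y + v y) differentiable (at y)" for y
    using u v by (simp add: C1_imp_differentiable)
  have "pd (\<lambda>y. u y + v y) c = (\<lambda>y. pd u c y + pd v c y)" for c
    using u v by (intro ext pd_add C1_imp_differentiable)
  then show "continuous_on UNIV (pd (\<lambda>y. u y + v y) c)" for c
    using u v by (auto intro!: continuous_on_add C1_continuous_on_pd)
qed

lemma C1_diff:
  assumes u: "C1 u" and v: "C1 v"
  shows "C1 (\<lambda>y. u y - v y)"
proof (rule C1I)
  show "(\<lambda>y. u y - v y) differentiable (at y)" for y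
    using u v by (simp add: C1_imp_differentiable)
  have "pd (\<lambda>y. u y - v y) c = (\<lambda>y. pd u c y - pd v c y)" for c
    using u v by (intro ext pd_diff C1_imp_differentiable)
  then show "continuous_on UNIV (pd (\<lambda>y. u y - v y) c)" for c
    using u v by (auto intro!: continuous_on_diff C1_continuous_on_pd)
qed

lemma C1_mult:
  assumes u: "C1 u" and v: "C1 v"
  shows "C1 (\<lambda>y. u y * v y)"
proof (rule C1I)
  show "(\<lambda>y. u y * v y) differentiable (at y)" for y
    using u v by (simp add: C1_imp_differentiable)
  have "pd (\<lambda>y. u y * v y) c = (\<lambda>y. u y * pd v c y + pd u c y * v y)" for c
    using u v by (intro ext pd_mult C1_imp_differentiable)
  moreover have "continuous_on UNIV u" "continuous_on UNIV v"
    using u v by (simp_all add: C1_imp_continuous_on)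
  ultimately show "continuous_on UNIV (pd (\<lambda>y. u y * v y) c)" for c
    using u v by (auto intro!: continuous_on_add continuous_on_mult C1_continuous_on_pd)
qed

lemma C1_sum: "finite I \<Longrightarrow> (\<And>i. i \<in> I \<Longrightarrow> C1 (u i)) \<Longrightarrow> C1 (\<lambda>y. \<Sum>i\<in>I. u i y)"
  by (induction I rule: finite_induct) (auto intro: C1_add C1_const)

lemma smooth_imp_C2: "smooth u \<Longrightarrow> C2 u"
proof -
  assume "smooth u"
  then have "Ck 3 u" unfolding smooth_def by blast
  then have "(\<forall>x. u differentiable (at x)) \<and> (\<forall>b\<in>Basis. (\<forall>x. pd u b differentiable (at x)) \<and>
     (\<forall>c\<in>Basis. \<forall>x. pd (pd u b) c differentiable (at x)))"
    by (simp add: numeral_3_eq_3)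
  then show ?thesis unfolding C2_def C1_def
    by (meson continuous_on_eq_continuous_within differentiable_imp_continuous_within)
qed

lemma smooth_imp_C1: "smooth u \<Longrightarrow> C1 u"
  using smooth_imp_C2 C2_def by blast

lemma C2_imp_C1: "C2 u \<Longrightarrow> C1 u"
  by (simp add: C2_def)

lemma C2_imp_C1_pd: "C2 u \<Longrightarrow> C1 (pd u a)"
  by (subst C1_pd_eq_sum_Basis[OF C2_imp_C1]) (auto simp: C2_def intro!: C1_sum C1_mult C1_const)

definition hess :: "('a::euclidean_space \<Rightarrow> real) \<Rightarrow> 'a \<Rightarrow> 'a \<Rightarrow> 'a \<Rightarrow> real" where
  "hess u y a w = pd (pd u a) w y"

lemma hess_commute: "C2 u \<Longrightarrow> hess u y a w = hess u y w a"
  unfolding hess_def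
  by (rule pd_pd_commute)
    (auto simp: C1_imp_differentiable C2_imp_C1 C2_imp_C1_pd
      intro!: continuous_on_interior[of UNIV] C1_continuous_on_pd)

lemma hess_eq_sum_Basis: "C2 u \<Longrightarrow> hess u y a w = (\<Sum>b\<in>Basis. (a \<bullet> b) * hess u y b w)"
  unfolding hess_def
  by (subst C1_pd_eq_sum_Basis[OF C2_imp_C1])
    (auto intro!: pd_sum_const_mult C1_imp_differentiable C2_imp_C1_pd)

lemma bilinear_hess:
  assumes "C2 u"
  shows "bilinear (hess u y)"
  unfolding bilinear_def
proof
  show "\<forall>a. linear (hess u y a)"
    unfolding hess_def[abs_def]
    using assms by (auto intro!: linear_pd C1_imp_differentiable C2_imp_C1_pd)
  then show "\<forall>w. linear (\<lambda>a. hess u y a w)"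
    using hess_commute[OF assms] by simp
qed

lemma has_derivative_grad:
  "C2 u \<Longrightarrow> (grad u has_derivative (\<lambda>w. \<Sum>b\<in>Basis. hess u y b w *\<^sub>R b)) (at y)"
  unfolding grad_def hess_def
  by (intro has_derivative_sum has_derivative_scaleR_left has_derivative_pd
      C1_imp_differentiable C2_imp_C1_pd)

lemma inner_sum_hess:
  assumes "C2 u"
  shows "(\<Sum>b\<in>Basis. hess u y b w *\<^sub>R b) \<bullet> v = hess u y v w"
    and "v \<bullet> (\<Sum>b\<in>Basis. hess u y b w *\<^sub>R b) = hess u y v w"
  using assms unfolding inner_sum_left inner_sum_right
  by (simp_all add: hess_eq_sum_Basis[of u y v] mult.commute inner_commute[of v])

lemma bilinear_eq_sum_Basis:
  fixes B :: "'a::euclidean_space \<Rightarrow> 'a \<Rightarrow> real"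
  assumes "bilinear B"
  shows "B a v = (\<Sum>b\<in>Basis. (v \<bullet> b) * B a b)"
proof -
  have lin: "linear (B a)" using assms by (simp add: bilinear_def)
  have "B a v = B a (\<Sum>b\<in>Basis. (v \<bullet> b) *\<^sub>R b)" by (simp add: euclidean_representation)
  also have "\<dots> = (\<Sum>b\<in>Basis. (v \<bullet> b) * B a b)"
    by (simp add: linear_sum[OF lin] linear_scale[OF lin])
  finally show ?thesis .
qed

section \<open>The symbol of \<open>X\<close>\<close>

lemma lie_symb_linear:
  fixes Y :: "'a::euclidean_space \<Rightarrow> 'a"
  assumes dY: "\<And>j. j \<in> Basis \<Longrightarrow> (\<lambda>y. Y y \<bullet> j) differentiable (at x)"
    and S: "\<And>eta. S x eta = V \<bullet> eta"
  shows "lie_symb del Y S x xi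
       = pd (\<lambda>y. S y xi) (Y x) x + del * divg Y x * (V \<bullet> xi) - pd (\<lambda>y. Y y \<bullet> xi) V x"
proof -
  have "pd (\<lambda>eta. S x eta) l xi = V \<bullet> l" for l
    unfolding S by (rule pd_eqI[OF has_derivative_inner_right[OF has_derivative_ident]])
  then have "(\<Sum>j\<in>Basis. \<Sum>l\<in>Basis. pd (\<lambda>y. Y y \<bullet> j) l x * (xi \<bullet> j) * pd (\<lambda>eta. S x eta) l xi)
      = (\<Sum>j\<in>Basis. (xi \<bullet> j) * pd (\<lambda>y. Y y \<bullet> j) V x)"
    by (simp add: pd_eq_sum_Basis[OF dY, of _ V] sum_distrib_left algebra_simps)
  also have "\<dots> = pd (\<lambda>y. Y y \<bullet> xi) V x"
    by (rule pd_inner_eq_sum_Basis[symmetric]) (rule dY)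
  finally show ?thesis unfolding lie_symb_def S by simp
qed

definition jrot :: "'n::finite pt \<Rightarrow> 'n pt" where
  "jrot v = (- fst (snd v), fst v, 0)"

definition hproj :: "'n::finite pt \<Rightarrow> 'n pt" where
  "hproj v = (fst v, fst (snd v), 0)"

definition e_t :: "'n::finite pt" where
  "e_t = (0, 0, 1)"

lemma inner_jrot_hproj_e_t:
  fixes a b :: "'n::finite pt"
  shows "jrot a \<bullet> b = fst a \<bullet> fst (snd b) - fst (snd a) \<bullet> fst b"
    and "b \<bullet> jrot a = fst a \<bullet> fst (snd b) - fst (snd a) \<bullet> fst b"
    and "hproj a \<bullet> b = fst a \<bullet> fst b + fst (snd a) \<bullet> fst (snd b)"
    and "b \<bullet> hproj a = fst a \<bullet> fst b + fst (snd a) \<bullet> fst (snd b)"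
    and "a \<bullet> e_t = snd (snd a)" and "e_t \<bullet> a = snd (snd a)"
  by (auto simp: jrot_def hproj_def e_t_def inner_prod_def inner_commute)

lemma components_jrot_hproj_e_t:
  fixes v :: "'n::finite pt"
  shows "fst (jrot v) = - fst (snd v)" "fst (snd (jrot v)) = fst v" "snd (snd (jrot v)) = 0"
    and "fst (hproj v) = fst v" "fst (snd (hproj v)) = fst (snd v)" "snd (snd (hproj v)) = 0"
    and "fst (e_t :: 'n pt) = 0" "fst (snd (e_t :: 'n pt)) = 0" "snd (snd (e_t :: 'n pt)) = 1"
  by (simp_all add: jrot_def hproj_def e_t_def)

lemma inner_jrot_swap: "jrot a \<bullet> b = - (jrot b \<bullet> a)"
  by (simp add: inner_jrot_hproj_e_t inner_commute)

lemma inner_hproj_swap: "a \<bullet> hproj b = hproj a \<bullet> b"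
  by (simp add: inner_jrot_hproj_e_t inner_commute)

lemma bounded_linear_hproj: "bounded_linear hproj"
  by (rule linear_conv_bounded_linear[THEN iffD1], rule linearI) (simp_all add: hproj_def)

lemma bounded_linear_jrot: "bounded_linear jrot"
  by (rule linear_conv_bounded_linear[THEN iffD1], rule linearI) (simp_all add: jrot_def)

text \<open>\<open>symb_vec c g u0 x\<close> is the vector \<open>V\<^sub>c(u)(x)\<close> with \<open>X(u)(x,\<xi>) = V\<^sub>c(u)(x) \<bullet> \<xi>\<close>, for
  \<open>g = \<nabla>u(x)\<close> and \<open>u0 = u(x)\<close> (see \<open>Xop_eq_symb_vec\<close>).\<close>

definition symb_vec :: "real \<Rightarrow> 'n::finite pt \<Rightarrow> real \<Rightarrow> 'n pt \<Rightarrow> 'n pt" where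
  "symb_vec c g u0 x = - jrot g - (g \<bullet> e_t) *\<^sub>R hproj x + (hproj x \<bullet> g + c * u0) *\<^sub>R e_t"

definition symb_deriv ::
    "real \<Rightarrow> ('n::finite pt \<Rightarrow> 'n pt \<Rightarrow> real) \<Rightarrow> 'n pt \<Rightarrow> 'n pt \<Rightarrow> 'n pt \<Rightarrow> 'n pt \<Rightarrow> real" where
  "symb_deriv c B g x xi w = B (jrot xi) w - B e_t w * (hproj x \<bullet> xi) - (g \<bullet> e_t) * (hproj w \<bullet> xi)
     + (xi \<bullet> e_t) * (B (hproj x) w + g \<bullet> hproj w + c * (g \<bullet> w))"

lemma inner_symb_vec:
  "symb_vec c g u0 x \<bullet> xi = g \<bullet> jrot xi - (g \<bullet> e_t) * (hproj x \<bullet> xi) + (xi \<bullet> e_t) * (g \<bullet> hproj x + c * u0)"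
  unfolding symb_vec_def
  by (simp add: inner_jrot_hproj_e_t inner_commute algebra_simps)

lemma Xop_eq_symb_vec:
  fixes u :: "'n::finite pt \<Rightarrow> real"
  assumes "u differentiable (at x)"
  shows "Xop lam u x xi = symb_vec (2 * (real CARD('n) + 1) * lam) (grad u x) (u x) x \<bullet> xi"
proof -
  have unit_vectors: "g \<bullet> (axis k 1, 0, 0) = fst g $ k" "g \<bullet> (0, axis k 1, 0) = fst (snd g) $ k"
    "g \<bullet> (0, 0, 1) = snd (snd g)" for g :: "'n pt" and k
    by (auto simp: inner_prod_def inner_axis)
  show ?thesis
    unfolding Xop_def inner_symb_vec dq_def dp_def dt_def Es_def Es_xi_def pd_eq_inner_grad[OF assms]
    by (simp add: unit_vectors inner_jrot_hproj_e_t inner_vec_def sum_subtractf sum.distrib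
        sum_distrib_left algebra_simps)
qed

lemma has_derivative_symb_vec:
  fixes u :: "'n::finite pt \<Rightarrow> real"
  assumes u: "C2 u"
  shows "((\<lambda>z. symb_vec c (grad u z) (u z) z \<bullet> xi) has_derivative
     symb_deriv c (hess u y) (grad u y) y xi) (at y)"
proof -
  have du: "u differentiable (at y)" using u by (simp add: C1_imp_differentiable C2_imp_C1)
  show ?thesis
    unfolding inner_symb_vec
    by (rule has_derivative_eq_rhs,
        (rule derivative_eq_intros has_derivative_grad[OF u] has_derivative_pd[OF du]
          bounded_linear.has_derivative[OF bounded_linear_hproj] refl)+)
      (simp add: fun_eq_iff symb_deriv_def inner_sum_hess[OF u] pd_eq_inner_grad[OF du])
qed

lemma sum_Basis_bilinear_jrot:
  fixes B :: "'n::finite pt \<Rightarrow> 'n pt \<Rightarrow> real"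
  assumes bil: "bilinear B" and sym: "\<And>a b. B a b = B b a"
  shows "(\<Sum>b\<in>Basis. B (jrot b) b) = 0"
proof -
  have expand: "B a w = (\<Sum>c\<in>Basis. (a \<bullet> c) * B c w)" for a w
    using bilinear_eq_sum_Basis[OF bil, of w a] sym by simp
  define S where "S = (\<Sum>b\<in>Basis. B (jrot b) b)"
  have "S = (\<Sum>b\<in>Basis. \<Sum>c\<in>Basis. (jrot b \<bullet> c) * B c b)"
    unfolding S_def by (rule sum.cong[OF refl], rule expand)
  also have "\<dots> = (\<Sum>b\<in>Basis. \<Sum>c\<in>Basis. - ((jrot c \<bullet> b) * B b c))"
    by (intro sum.cong refl) (metis inner_jrot_swap sym mult_minus_left)
  also have "\<dots> = - (\<Sum>c\<in>Basis. \<Sum>b\<in>Basis. (jrot c \<bullet> b) * B b c)"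
    by (subst sum.swap) (simp add: sum_negf)
  also have "\<dots> = - S"
    unfolding S_def by (simp add: expand[of "jrot _"])
  finally show ?thesis unfolding S_def by simp
qed

lemma sum_Basis_inner_hproj: "(\<Sum>b\<in>(Basis :: 'n::finite pt set). hproj b \<bullet> b) = 2 * real CARD('n)"
proof -
  have "hproj b \<bullet> b = b \<bullet> b - (e_t \<bullet> b) * (e_t \<bullet> b)" for b :: "'n pt"
    by (simp add: hproj_def e_t_def inner_prod_def)
  moreover have "(\<Sum>b\<in>(Basis :: 'n pt set). (e_t \<bullet> b) * (e_t \<bullet> b)) = 1"
    using euclidean_inner[of e_t e_t] by (simp add: inner_jrot_hproj_e_t e_t_def)
  ultimately show ?thesis by (simp add: sum_subtractf)
qed

lemma sum_Basis_symb_deriv: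
  fixes B :: "'n::finite pt \<Rightarrow> 'n pt \<Rightarrow> real"
  assumes bil: "bilinear B" and sym: "\<And>a b. B a b = B b a"
  shows "(\<Sum>b\<in>Basis. symb_deriv c B g y b b) = (c - 2 * real CARD('n)) * (g \<bullet> e_t)"
proof -
  have "(\<Sum>b\<in>Basis. symb_deriv c B g y b b) = (\<Sum>b\<in>Basis. B (jrot b) b)
      - (\<Sum>b\<in>Basis. (hproj y \<bullet> b) * B e_t b) - (g \<bullet> e_t) * (\<Sum>b\<in>(Basis :: 'n pt set). hproj b \<bullet> b)
      + (\<Sum>b\<in>Basis. (e_t \<bullet> b) * B (hproj y) b) + (\<Sum>b\<in>Basis. (e_t \<bullet> b) * (hproj g \<bullet> b))
      + c * (\<Sum>b\<in>Basis. (e_t \<bullet> b) * (g \<bullet> b))"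
    unfolding symb_deriv_def
    by (simp add: sum.distrib sum_subtractf sum_distrib_left algebra_simps inner_commute[of _ e_t]
        inner_hproj_swap)
  also have "\<dots> = - B e_t (hproj y) - (g \<bullet> e_t) * (2 * real CARD('n)) + B (hproj y) e_t + c * (g \<bullet> e_t)"
  proof -
    have "e_t \<bullet> hproj g = 0" by (simp add: hproj_def e_t_def inner_prod_def)
    then have "(\<Sum>b\<in>Basis. (e_t \<bullet> b) * (hproj g \<bullet> b)) = 0"
      using euclidean_inner[of e_t "hproj g"] by (simp add: inner_commute)
    moreover have "(\<Sum>b\<in>Basis. (e_t \<bullet> b) * (g \<bullet> b)) = g \<bullet> e_t"
      using euclidean_inner[of e_t g] by (simp add: inner_commute)
    ultimately show ?thesis
      using bilinear_eq_sum_Basis[OF bil, of e_t "hproj y"] bilinear_eq_sum_Basis[OF bil, of "hproj y" e_t]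
      by (simp add: sum_Basis_bilinear_jrot[OF bil sym] sum_Basis_inner_hproj)
  qed
  also have "\<dots> = (c - 2 * real CARD('n)) * (g \<bullet> e_t)"
    using sym[of e_t "hproj y"] by (simp add: algebra_simps)
  finally show ?thesis .
qed

text \<open>The commutation identity at a point: \<open>F\<close>, \<open>gf\<close>, \<open>fx\<close> stand for the Hessian, gradient and
  value of \<open>f\<close>, \<open>B\<close>, \<open>gH\<close>, \<open>hx\<close> for those of the Hamiltonian, and \<open>gL\<close> for the gradient of \<open>L\<^sub>Z f\<close>.\<close>

lemma symb_vec_bracket:
  fixes F B :: "'n::finite pt \<Rightarrow> 'n pt \<Rightarrow> real"
  assumes F: "bilinear F" "\<And>a b. F a b = F b a" and B: "bilinear B" "\<And>a b. B a b = B b a"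
    and gL: "\<And>w. gL \<bullet> w = F (symb_vec (-2) gH hx x) w + symb_deriv (-2) B gH x gf w
                            - c * (B e_t w * fx + (gH \<bullet> e_t) * (gf \<bullet> w))"
  shows "symb_vec c gL (gf \<bullet> symb_vec (-2) gH hx x - c * (gH \<bullet> e_t) * fx) x \<bullet> xi
       = symb_deriv c F gf x xi (symb_vec (-2) gH hx x)
         - (c + 2) * (gH \<bullet> e_t) * (symb_vec c gf fx x \<bullet> xi)
         - symb_deriv (-2) B gH x xi (symb_vec c gf fx x)"
  unfolding inner_symb_vec gL
  unfolding symb_vec_def symb_deriv_def
  by (simp add: bilinear_ladd[OF F(1)] bilinear_radd[OF F(1)] bilinear_lsub[OF F(1)] bilinear_rsub[OF F(1)]
      bilinear_lneg[OF F(1)] bilinear_rneg[OF F(1)] bilinear_lmul[OF F(1)] bilinear_rmul[OF F(1)]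
      bilinear_ladd[OF B(1)] bilinear_radd[OF B(1)] bilinear_lsub[OF B(1)] bilinear_rsub[OF B(1)]
      bilinear_lneg[OF B(1)] bilinear_rneg[OF B(1)] bilinear_lmul[OF B(1)] bilinear_rmul[OF B(1)]
      F(2) B(2) inner_jrot_hproj_e_t components_jrot_hproj_e_t inner_commute algebra_simps)

section \<open>Contact vector fields\<close>

lemma alpha_eq_jrot: "alpha y = -(1/2) *\<^sub>R (jrot y + e_t)"
  by (simp add: alpha_def jrot_def e_t_def)

lemma has_derivative_alpha: "(alpha has_derivative (\<lambda>w. -(1/2) *\<^sub>R jrot w)) (at y)"
  unfolding alpha_eq_jrot[abs_def]
  by (rule has_derivative_eq_rhs,
      (rule derivative_eq_intros bounded_linear.has_derivative[OF bounded_linear_jrot] refl)+)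
    simp

definition contact_ham :: "('n::finite pt \<Rightarrow> 'n pt) \<Rightarrow> 'n pt \<Rightarrow> real" where
  "contact_ham Z y = alpha y \<bullet> Z y"

locale contact_field =
  fixes Z :: "'n::finite pt \<Rightarrow> 'n pt" and g :: "'n pt \<Rightarrow> real"
  assumes smooth_Z: "smooth_vf Z" and smooth_g: "smooth g"
    and lie_form_alpha: "\<And>x. lie_form Z alpha x = g x *\<^sub>R alpha x"
begin

lemma C1_inner_Z: "C1 (\<lambda>y. Z y \<bullet> v)"
proof -
  have "C1 (\<lambda>y. Z y \<bullet> c)" if "c \<in> Basis" for c
    using smooth_Z that smooth_imp_C1 unfolding smooth_vf_def by blast
  then have "C1 (\<lambda>y. \<Sum>c\<in>Basis. (Z y \<bullet> c) * (v \<bullet> c))"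
    by (intro C1_sum C1_mult C1_const) auto
  then show ?thesis by (simp add: euclidean_inner[of _ v])
qed

lemma differentiable_Z: "Z differentiable (at y)"
proof -
  have "(\<lambda>y. (Z y \<bullet> c) *\<^sub>R c) differentiable (at y)" for c
    by (intro differentiable_scaleR C1_imp_differentiable[OF C1_inner_Z] differentiable_const)
  then have "(\<lambda>y. \<Sum>c\<in>Basis. (Z y \<bullet> c) *\<^sub>R c) differentiable (at y)"
    by simp
  then show ?thesis by (simp add: euclidean_representation)
qed

lemma has_derivative_Z: "(Z has_derivative frechet_derivative Z (at y)) (at y)"
  using differentiable_Z frechet_derivative_works by blast

lemma pd_inner_Z: "pd (\<lambda>z. Z z \<bullet> v) w y = frechet_derivative Z (at y) w \<bullet> v"
  by (rule pd_eqI[OF has_derivative_inner_left[OF has_derivative_Z]])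

lemma lie_form_alpha_inner:
  "lie_form Z alpha y \<bullet> w = -(1/2) * (jrot (Z y) \<bullet> w) + frechet_derivative Z (at y) w \<bullet> alpha y"
proof -
  have dZ: "(\<lambda>z. Z z \<bullet> c) differentiable (at y)" for c
    by (rule C1_imp_differentiable[OF C1_inner_Z])
  have pd_alpha: "pd (\<lambda>y. alpha y \<bullet> b) v y = -(1/2) * (jrot v \<bullet> b)" for b v
    by (simp add: pd_eqI[OF has_derivative_inner_left[OF has_derivative_alpha]])
  have "lie_form Z alpha y \<bullet> w
      = (\<Sum>b\<in>Basis. (w \<bullet> b) * (-(1/2) * (jrot (Z y) \<bullet> b) + pd (\<lambda>z. Z z \<bullet> alpha y) b y))"
    unfolding lie_form_def inner_sum_left pd_inner_eq_sum_Basis[OF dZ, of "alpha y"] pd_alpha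
    by (simp add: mult.commute inner_commute)
  also have "\<dots> = -(1/2) * (jrot (Z y) \<bullet> w) + pd (\<lambda>z. Z z \<bullet> alpha y) w y"
    unfolding pd_eq_sum_Basis[OF dZ[of "alpha y"], of w] euclidean_inner[of "jrot (Z y)" w]
    by (simp add: sum.distrib sum_subtractf sum_negf sum_divide_distrib sum_distrib_left algebra_simps)
  finally show ?thesis by (simp add: pd_inner_Z)
qed

lemma pd_contact_ham: "pd (contact_ham Z) w y = jrot (Z y) \<bullet> w + g y * (alpha y \<bullet> w)"
proof -
  have "(contact_ham Z has_derivative
      (\<lambda>w. alpha y \<bullet> frechet_derivative Z (at y) w + (-(1/2) *\<^sub>R jrot w) \<bullet> Z y)) (at y)"
    unfolding contact_ham_def[abs_def] by (rule has_derivative_inner[OF has_derivative_alpha has_derivative_Z])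
  then have "pd (contact_ham Z) w y = alpha y \<bullet> frechet_derivative Z (at y) w + (-(1/2) *\<^sub>R jrot w) \<bullet> Z y"
    by (rule pd_eqI)
  also have "\<dots> = jrot (Z y) \<bullet> w + g y * (alpha y \<bullet> w)"
    using lie_form_alpha_inner[of y w] inner_jrot_swap[of w "Z y"]
    by (simp add: lie_form_alpha inner_commute[of "alpha y"] algebra_simps)
  finally show ?thesis .
qed

lemma C2_contact_ham: "C2 (contact_ham Z)"
proof -
  have "pd (contact_ham Z) c y
      = (-1) * (Z y \<bullet> jrot c) + g y * ((1/2) * (y \<bullet> jrot c) - (1/2) * (e_t \<bullet> c))" for c y
    using inner_jrot_swap[of "Z y" c] inner_jrot_swap[of y c]
    by (simp add: pd_contact_ham alpha_eq_jrot inner_commute[of _ "jrot c"] algebra_simps)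
  then have pd_eq: "pd (contact_ham Z) c
      = (\<lambda>y. (-1) * (Z y \<bullet> jrot c) + g y * ((1/2) * (y \<bullet> jrot c) - (1/2) * (e_t \<bullet> c)))" for c
    by (simp add: fun_eq_iff)
  have C1_pd: "C1 (pd (contact_ham Z) c)" for c
    unfolding pd_eq
    by (intro C1_add C1_mult C1_diff C1_const C1_inner_Z C1_inner_left smooth_imp_C1 smooth_g)
  have "contact_ham Z differentiable (at y)" for y
    unfolding contact_ham_def[abs_def] differentiable_def
    using has_derivative_inner[OF has_derivative_alpha has_derivative_Z] by blast
  then have "C1 (contact_ham Z)"
    by (intro C1I C1_imp_continuous_on[OF C1_pd])
  with C1_pd show ?thesis unfolding C2_def by blast
qed

lemma differentiable_contact_ham: "contact_ham Z differentiable (at y)"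
  using C2_contact_ham by (simp add: C1_imp_differentiable C2_imp_C1)

lemma symb_vec_contact_ham: "Z y = symb_vec (-2) (grad (contact_ham Z) y) (contact_ham Z y) y"
proof (rule euclidean_eqI)
  fix b :: "'n pt"
  have gH: "grad (contact_ham Z) y \<bullet> v = jrot (Z y) \<bullet> v + g y * (alpha y \<bullet> v)" for v
    using pd_eq_inner_grad[OF differentiable_contact_ham] pd_contact_ham by simp
  show "Z y \<bullet> b = symb_vec (-2) (grad (contact_ham Z) y) (contact_ham Z y) y \<bullet> b"
    unfolding inner_symb_vec gH
    by (simp add: contact_ham_def alpha_eq_jrot inner_jrot_hproj_e_t components_jrot_hproj_e_t
        inner_commute algebra_simps inner_prod_def)
qed

lemma pd_inner_Z_eq_symb_deriv:
  "pd (\<lambda>z. Z z \<bullet> v) w y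
   = symb_deriv (-2) (hess (contact_ham Z) y) (grad (contact_ham Z) y) y v w"
proof -
  have "(\<lambda>z. Z z \<bullet> v) = (\<lambda>z. symb_vec (-2) (grad (contact_ham Z) z) (contact_ham Z z) z \<bullet> v)"
    using symb_vec_contact_ham by simp
  then show ?thesis
    by (simp add: pd_eqI[OF has_derivative_symb_vec[OF C2_contact_ham]])
qed

lemma divg_Z: "divg Z y = -2 * (real CARD('n) + 1) * (grad (contact_ham Z) y \<bullet> e_t)"
  unfolding divg_def pd_inner_Z_eq_symb_deriv
  by (simp add: sum_Basis_symb_deriv bilinear_hess hess_commute C2_contact_ham algebra_simps)

lemma lie_dens_contact:
  assumes "C1 f"
  shows "lie_dens lam Z f
    = (\<lambda>y. grad f y \<bullet> Z y - 2 * (real CARD('n) + 1) * lam * (grad (contact_ham Z) y \<bullet> e_t) * f y)"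
  using assms
  by (simp add: fun_eq_iff lie_dens_def divg_Z pd_eq_inner_grad C1_imp_differentiable inner_commute
      algebra_simps)

lemma has_derivative_lie_dens:
  fixes lam :: real
  assumes f: "C2 f"
  defines "c \<equiv> 2 * (real CARD('n) + 1) * lam"
  shows "(lie_dens lam Z f has_derivative (\<lambda>w. hess f x (Z x) w
     + symb_deriv (-2) (hess (contact_ham Z) x) (grad (contact_ham Z) x) x (grad f x) w
     - c * (hess (contact_ham Z) x e_t w * f x + (grad (contact_ham Z) x \<bullet> e_t) * (grad f x \<bullet> w)))) (at x)"
proof -
  have df: "f differentiable (at x)" using f by (simp add: C1_imp_differentiable C2_imp_C1)
  have DZ: "v \<bullet> frechet_derivative Z (at x) w
      = symb_deriv (-2) (hess (contact_ham Z) x) (grad (contact_ham Z) x) x v w" for v w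
    using pd_inner_Z[of v w x] pd_inner_Z_eq_symb_deriv[of v w x] by (simp add: inner_commute)
  show ?thesis
    unfolding lie_dens_contact[OF C2_imp_C1[OF f]] c_def[symmetric]
    by (rule has_derivative_eq_rhs,
        (rule derivative_eq_intros has_derivative_Z has_derivative_grad[OF f]
          has_derivative_grad[OF C2_contact_ham] has_derivative_pd[OF df] refl)+)
      (simp add: fun_eq_iff inner_sum_hess[OF f] inner_sum_hess[OF C2_contact_ham] DZ
        pd_eq_inner_grad[OF df] algebra_simps)
qed

lemma Xop_lie_dens:
  fixes lam :: real
  assumes f: "C2 f"
  defines "c \<equiv> 2 * (real CARD('n) + 1) * lam"
  shows "Xop lam (lie_dens lam Z f) x xi
    = symb_deriv c (hess f x) (grad f x) x xi (Z x)
      - (c + 2) * (grad (contact_ham Z) x \<bullet> e_t) * (symb_vec c (grad f x) (f x) x \<bullet> xi)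
      - symb_deriv (-2) (hess (contact_ham Z) x) (grad (contact_ham Z) x) x xi
          (symb_vec c (grad f x) (f x) x)"
proof -
  let ?L = "lie_dens lam Z f" and ?H = "contact_ham Z"
  have L': "(?L has_derivative (\<lambda>w. hess f x (Z x) w
     + symb_deriv (-2) (hess ?H x) (grad ?H x) x (grad f x) w
     - c * (hess ?H x e_t w * f x + (grad ?H x \<bullet> e_t) * (grad f x \<bullet> w)))) (at x)"
    unfolding c_def by (rule has_derivative_lie_dens[OF f])
  then have dL: "?L differentiable (at x)" by (auto simp: differentiable_def)
  have gL: "grad ?L x \<bullet> w = hess f x (Z x) w
     + symb_deriv (-2) (hess ?H x) (grad ?H x) x (grad f x) w
     - c * (hess ?H x e_t w * f x + (grad ?H x \<bullet> e_t) * (grad f x \<bullet> w))" for w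
    using pd_eqI[OF L', of w] pd_eq_inner_grad[OF dL, of w] by simp
  have Lx: "?L x = grad f x \<bullet> Z x - c * (grad ?H x \<bullet> e_t) * f x"
    by (simp add: lie_dens_contact[OF C2_imp_C1[OF f]] c_def)
  have "Xop lam ?L x xi = symb_vec c (grad ?L x) (?L x) x \<bullet> xi"
    unfolding c_def by (rule Xop_eq_symb_vec[OF dL])
  then show ?thesis
    unfolding Lx
    using symb_vec_bracket[where gH = "grad ?H x" and hx = "?H x" and x = x,
        OF bilinear_hess[OF f] hess_commute[OF f] bilinear_hess[OF C2_contact_ham]
        hess_commute[OF C2_contact_ham], unfolded symb_vec_contact_ham[symmetric], OF gL]
    by simp
qed

lemma lie_symb_Xop:
  fixes lam :: real
  assumes f: "C2 f"
  defines "c \<equiv> 2 * (real CARD('n) + 1) * lam"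
  shows "lie_symb (lam + 1 / (real CARD('n) + 1)) Z (Xop lam f) x xi
    = symb_deriv c (hess f x) (grad f x) x xi (Z x)
      - (c + 2) * (grad (contact_ham Z) x \<bullet> e_t) * (symb_vec c (grad f x) (f x) x \<bullet> xi)
      - symb_deriv (-2) (hess (contact_ham Z) x) (grad (contact_ham Z) x) x xi
          (symb_vec c (grad f x) (f x) x)"
proof -
  have df: "f differentiable (at y)" for y using f by (simp add: C1_imp_differentiable C2_imp_C1)
  have Xf: "Xop lam f y eta = symb_vec c (grad f y) (f y) y \<bullet> eta" for y eta
    unfolding c_def by (rule Xop_eq_symb_vec[OF df])
  have "pd (\<lambda>y. Xop lam f y xi) (Z x) x = symb_deriv c (hess f x) (grad f x) x xi (Z x)"
    unfolding Xf by (rule pd_eqI[OF has_derivative_symb_vec[OF f]])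
  moreover have "(lam + 1 / (real CARD('n) + 1)) * divg Z x * v
      = - ((c + 2) * (grad (contact_ham Z) x \<bullet> e_t) * v)" for v
    unfolding divg_Z c_def by (simp add: field_simps)
  ultimately show ?thesis
    by (simp add: lie_symb_linear[OF C1_imp_differentiable[OF C1_inner_Z] Xf]
        pd_inner_Z_eq_symb_deriv Xf)
qed

end

theorem mainTheorem1:
  fixes lam :: real and Z :: "'n::finite pt \<Rightarrow> 'n pt" and f :: "'n pt \<Rightarrow> real"
  assumes "contact_vf Z" and "smooth f"
  shows "Xop lam (lie_dens lam Z f) =
         lie_symb (lam + 1 / (real CARD('n) + 1)) Z (Xop lam f)"
proof (intro ext)
  fix x xi
  obtain g where "contact_field Z g"
    using assms(1) unfolding contact_vf_def contact_field_def by blast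
  then interpret contact_field Z g .
  have "C2 f" using assms(2) by (rule smooth_imp_C2)
  then show "Xop lam (lie_dens lam Z f) x xi = lie_symb (lam + 1 / (real CARD('n) + 1)) Z (Xop lam f) x xi"
    by (simp only: Xop_lie_dens lie_symb_Xop)
qed

end
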